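(* Let $\Gamma$ be a weighted digraph with vertex set $\{1,\dots,n\}$, $n>1$, without loops and with strictly positive arc weights, with Laplacian matrix $L$, in-forest dimension $d$, and let $\tilde J=\sigma_{n-d}^{-1}Q_{n-d}$. Then $$\tilde J=\lim_{\tau\to\infty}J(\tau)=\lim_{\tau\to\infty}(I+\tau L)^{-1}.$$
   Context: $W=(w_{ij})$ is the matrix of arc weights ($w_{ij}>0$ iff there is an arc $i\to j$, else $0$). The Laplacian $L=(\ell_{ij})$: $\ell_{ij}=-w_{ij}$ for $j\ne i$, $\ell_{ii}=\sum_{k\ne i}w_{ik}$. The weight of a subgraph is the product of its arc weights (1 if no arcs); the weight of a set of subgraphs is the sum of their weights. A converging tree is a weakly connected digraph with one vertex (the root) of outdegree 0 and all others of outdegree 1; an in-forest is a spanning subgraph of $\Gamma$ whose weak components are converging trees. The in-forest dimension $d$ is the minimal number of trees in an in-forest (so in-forests have at most $n-d$ arcs). $\sigma_k$ is the total weight of in-forests with $k$ arcs; $Q_k=(q^k_{ij})$ with $q^k_{ij}$ the total weight of in-forests with $k$ arcs in which $i$ lies in a tree rooted at $j$. For $\tau\ge0$, $Q(\tau)=\sum_{k=0}^{n-d}Q_k\tau^k$, $\sigma(\tau)=\sum_{k=0}^{n-d}\sigma_k\tau^k$ and $J(\tau)=\sigma(\tau)^{-1}Q(\tau)$. *)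

theory Defs
  imports "HOL-Analysis.Analysis"
begin

text \<open>Weighted digraph on the finite vertex type 'n, given by its weight matrix W:
  there is an arc i -> j iff W i j > 0.\<close>

definition arcs :: "real^'n^'n \<Rightarrow> ('n \<times> 'n) set" where
  "arcs W = {(i,j). W$i$j > 0}"

definition laplacian :: "real^'n^'n \<Rightarrow> real^'n^'n" where
  "laplacian W = (\<chi> i j. if i = j then (\<Sum>k\<in>UNIV - {i}. W$i$k) else - W$i$j)"

definition outdeg :: "('n \<times> 'n) set \<Rightarrow> 'n \<Rightarrow> nat" where
  "outdeg F i = card {j. (i,j) \<in> F}"

definition weakly_conn :: "('n \<times> 'n) set \<Rightarrow> ('n \<times> 'n) set" where
  "weakly_conn F = (F \<union> F\<inverse>)\<^sup>*"

definition converging_tree :: "'n set \<Rightarrow> ('n \<times> 'n) set \<Rightarrow> bool" where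
  "converging_tree V F \<longleftrightarrow>
     (let A = F \<inter> (V \<times> V) in
        V \<noteq> {} \<and> (\<forall>x\<in>V. \<forall>y\<in>V. (x,y) \<in> (A \<union> A\<inverse>)\<^sup>*) \<and>
        (\<exists>r\<in>V. outdeg A r = 0 \<and> (\<forall>v\<in>V. v \<noteq> r \<longrightarrow> outdeg A v = 1)))"

definition in_forest :: "real^'n^'n \<Rightarrow> ('n \<times> 'n) set \<Rightarrow> bool" where
  "in_forest W F \<longleftrightarrow> F \<subseteq> arcs W \<and>
     (\<forall>C \<in> UNIV // weakly_conn F. converging_tree C F)"

definition num_trees :: "('n \<times> 'n) set \<Rightarrow> nat" where
  "num_trees F = card (UNIV // weakly_conn F)"

definition forest_dim :: "real^'n^'n \<Rightarrow> nat" where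
  "forest_dim W = Min (num_trees ` {F. in_forest W F})"

definition weight :: "real^'n^'n \<Rightarrow> ('n \<times> 'n) set \<Rightarrow> real" where
  "weight W F = (\<Prod>(i,j)\<in>F. W$i$j)"

definition sigma :: "real^'n^'n \<Rightarrow> nat \<Rightarrow> real" where
  "sigma W k = (\<Sum>F\<in>{F. in_forest W F \<and> card F = k}. weight W F)"

definition in_tree_rooted_at :: "('n \<times> 'n) set \<Rightarrow> 'n \<Rightarrow> 'n \<Rightarrow> bool" where
  "in_tree_rooted_at F i j \<longleftrightarrow> (i,j) \<in> weakly_conn F \<and> outdeg F j = 0"

definition Qmat :: "real^'n^'n \<Rightarrow> nat \<Rightarrow> real^'n^'n" where
  "Qmat W k = (\<chi> i j. \<Sum>F\<in>{F. in_forest W F \<and> card F = k \<and> in_tree_rooted_at F i j}. weight W F)"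

definition sigma_poly :: "real^'n^'n \<Rightarrow> real \<Rightarrow> real" where
  "sigma_poly W \<tau> = (\<Sum>k\<le>CARD('n) - forest_dim W. sigma W k * \<tau> ^ k)"

definition Q_poly :: "real^'n^'n \<Rightarrow> real \<Rightarrow> real^'n^'n" where
  "Q_poly W \<tau> = (\<Sum>k\<le>CARD('n) - forest_dim W. (\<tau> ^ k) *\<^sub>R Qmat W k)"

definition Jmat :: "real^'n^'n \<Rightarrow> real \<Rightarrow> real^'n^'n" where
  "Jmat W \<tau> = inverse (sigma_poly W \<tau>) *\<^sub>R Q_poly W \<tau>"

definition Jtilde :: "real^'n^'n \<Rightarrow> real^'n^'n" where
  "Jtilde W = inverse (sigma W (CARD('n) - forest_dim W)) *\<^sub>R Qmat W (CARD('n) - forest_dim W)"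

end

(*
  In-forests are exactly the acyclic arc sets in which every vertex has at most one out-arc; the
  roots are the vertices outside the domain, and this description is used throughout.
  Write Q_k for the matrix of k-arc in-forest weights. The heart of the proof is the identity
  L Q_k = sigma_(k+1) I - Q_(k+1). Expand (L Q_k)_ij = sum_m w_im (q_ij - q_mj) over pairs (F, m)
  of a k-arc in-forest F and an arc i -> m. Pairs with m in the tree of i contribute nothing; if i
  has an out-arc i -> p in F, exchanging it for i -> m is an involution swapping the two terms,
  so these pairs cancel; if i is a root, adding the arc i -> m is a bijection onto the (k+1)-arc
  in-forests in which i is not a root, and these give sigma_(k+1) delta_ij - q^(k+1)_ij.
  Telescoping yields (I + tau L) Q(tau) = sigma(tau) I, so J(tau) = (I + tau L)^-1 for tau >= 0.
  Both Q(tau) and sigma(tau) have degree n - d with sigma_(n-d) > 0, so J(tau) tends to the ratio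
  of the leading coefficients.
*)
theory Submission
  imports Defs
begin

section \<open>Matrices and rational functions\<close>

lemma matrix_add_rdistrib: "((A::'a::semiring_1^'n^'m) + B) ** C = A ** C + B ** C"
  by (simp add: matrix_matrix_mult_def vec_eq_iff sum.distrib distrib_right)

lemma matrix_mult_sum_right: "(A::'a::semiring_1^'n^'m) ** sum f S = (\<Sum>k\<in>S. A ** f k)"
  by (induction S rule: infinite_finite_induct) (simp_all add: matrix_add_ldistrib)

lemma matrix_inv_eqI:
  fixes A B :: "'a::field^'n^'n"
  assumes AB: "A ** B = mat 1"
  shows "matrix_inv A = B"
proof -
  have "\<exists>A'. A ** A' = mat 1 \<and> A' ** A = mat 1"
    using AB matrix_left_right_inverse by blast
  then have inv: "matrix_inv A ** A = mat 1"
    unfolding matrix_inv_def by (rule someI_ex[THEN conjunct2])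
  have "matrix_inv A = matrix_inv A ** (A ** B)" by (simp add: AB)
  also have "\<dots> = (matrix_inv A ** A) ** B" by (rule matrix_mul_assoc)
  also have "\<dots> = B" by (simp add: inv)
  finally show ?thesis .
qed

lemma sum_powers_reverse:
  fixes c :: "nat \<Rightarrow> 'a::real_vector" and t :: real
  assumes "t \<noteq> 0"
  shows "(\<Sum>k\<le>N. t^k *\<^sub>R c k) = t^N *\<^sub>R (\<Sum>k\<le>N. inverse t ^ (N - k) *\<^sub>R c k)"
  unfolding scaleR_sum_right
proof (rule sum.cong)
  fix k assume "k \<in> {..N}"
  then have "t^N * inverse t ^ (N - k) = t^k"
    using assms by (simp add: power_diff power_inverse field_simps)
  then show "t^k *\<^sub>R c k = t^N *\<^sub>R inverse t ^ (N - k) *\<^sub>R c k" by simp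
qed simp

lemma tendsto_sum_inverse_powers_at_top:
  fixes c :: "nat \<Rightarrow> 'a::real_normed_vector"
  shows "((\<lambda>t::real. \<Sum>k\<le>N. inverse t ^ (N - k) *\<^sub>R c k) \<longlongrightarrow> c N) at_top"
proof -
  have "((\<lambda>t::real. \<Sum>k\<le>N. inverse t ^ (N - k) *\<^sub>R c k) \<longlongrightarrow> (\<Sum>k\<le>N. 0 ^ (N - k) *\<^sub>R c k)) at_top"
    by (intro tendsto_intros tendsto_inverse_0_at_top filterlim_ident)
  moreover have "(\<Sum>k\<le>N. (0::real) ^ (N - k) *\<^sub>R c k) = (\<Sum>k\<le>N. if k = N then c k else 0)"
    by (rule sum.cong) (auto simp: power_0_left)
  ultimately show ?thesis by simp
qed

lemma tendsto_poly_ratio_at_top: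
  fixes c :: "nat \<Rightarrow> 'a::real_normed_vector" and s :: "nat \<Rightarrow> real"
  assumes "s N \<noteq> 0"
  shows "((\<lambda>t. inverse (\<Sum>k\<le>N. s k * t^k) *\<^sub>R (\<Sum>k\<le>N. t^k *\<^sub>R c k)) \<longlongrightarrow> inverse (s N) *\<^sub>R c N) at_top"
proof -
  let ?s = "\<lambda>t::real. \<Sum>k\<le>N. inverse t ^ (N - k) *\<^sub>R s k"
  let ?c = "\<lambda>t::real. \<Sum>k\<le>N. inverse t ^ (N - k) *\<^sub>R c k"
  have "((\<lambda>t. inverse (?s t) *\<^sub>R ?c t) \<longlongrightarrow> inverse (s N) *\<^sub>R c N) at_top"
    using assms by (intro tendsto_intros tendsto_sum_inverse_powers_at_top)
  moreover have "\<forall>\<^sub>F t in at_top. inverse (?s t) *\<^sub>R ?c t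
      = inverse (\<Sum>k\<le>N. s k * t^k) *\<^sub>R (\<Sum>k\<le>N. t^k *\<^sub>R c k)"
  proof (rule eventually_mono[OF eventually_gt_at_top[of 0]])
    fix t :: real assume "0 < t"
    then have "t \<noteq> 0" by simp
    from sum_powers_reverse[OF this, where N = N and c = s] sum_powers_reverse[OF this, where N = N and c = c]
      \<open>t \<noteq> 0\<close>
    show "inverse (?s t) *\<^sub>R ?c t = inverse (\<Sum>k\<le>N. s k * t^k) *\<^sub>R (\<Sum>k\<le>N. t^k *\<^sub>R c k)"
      by (simp add: mult.commute)
  qed
  ultimately show ?thesis by (rule Lim_transform_eventually)
qed

section \<open>Weak components and roots\<close>

lemma weakly_conn_equiv: "equiv UNIV (weakly_conn F)"
  unfolding weakly_conn_def
  by (intro equivI refl_rtrancl sym_rtrancl sym_Un_converse trans_rtrancl) auto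

lemma weakly_conn_refl [simp]: "(x,x) \<in> weakly_conn F"
  unfolding weakly_conn_def by simp

lemma weakly_conn_sym: "(x,y) \<in> weakly_conn F \<Longrightarrow> (y,x) \<in> weakly_conn F"
  using sym_rtrancl[OF sym_Un_converse] unfolding weakly_conn_def by (rule symD)

lemma weakly_conn_trans: "(x,y) \<in> weakly_conn F \<Longrightarrow> (y,z) \<in> weakly_conn F \<Longrightarrow> (x,z) \<in> weakly_conn F"
  unfolding weakly_conn_def by (rule rtrancl_trans)

lemma rtrancl_subset_weakly_conn: "F\<^sup>* \<subseteq> weakly_conn F"
  unfolding weakly_conn_def by (simp add: rtrancl_mono)

lemma weakly_conn_arc: "(x,y) \<in> F \<Longrightarrow> (x,y) \<in> weakly_conn F"
  unfolding weakly_conn_def by blast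

lemma weakly_conn_mono: "F \<subseteq> G \<Longrightarrow> weakly_conn F \<subseteq> weakly_conn G"
  unfolding weakly_conn_def by (intro rtrancl_mono) blast

lemma weakly_conn_insert:
  "weakly_conn (insert (a,b) F) = weakly_conn F \<union>
     {(x,y). (x,a) \<in> weakly_conn F \<and> (b,y) \<in> weakly_conn F \<or>
             (x,b) \<in> weakly_conn F \<and> (a,y) \<in> weakly_conn F}"
proof -
  let ?S = "F \<union> F\<inverse>"
  have "insert (a,b) F \<union> (insert (a,b) F)\<inverse> = insert (a,b) (insert (b,a) ?S)"
    by blast
  then have "weakly_conn (insert (a,b) F) = (insert (a,b) (insert (b,a) ?S))\<^sup>*"
    unfolding weakly_conn_def by simp
  also have "\<dots> = weakly_conn F \<union>
     {(x,y). (x,a) \<in> weakly_conn F \<and> (b,y) \<in> weakly_conn F \<or>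
             (x,b) \<in> weakly_conn F \<and> (a,y) \<in> weakly_conn F}"
    unfolding rtrancl_insert weakly_conn_def by (auto intro: rtrancl_trans)
  finally show ?thesis .
qed

lemma weakly_conn_to_root_rtrancl:
  assumes sv: "single_valued F" and j: "j \<notin> Domain F" and xj: "(x,j) \<in> weakly_conn F"
  shows "(x,j) \<in> F\<^sup>*"
  using xj[unfolded weakly_conn_def]
proof (induction rule: converse_rtrancl_induct)
  case base
  show ?case by simp
next
  case (step x y)
  show ?case
  proof (cases "(x,y) \<in> F")
    case True
    show ?thesis using True step.IH by (rule converse_rtrancl_into_rtrancl)
  next
    case False
    with step.hyps(1) have yx: "(y,x) \<in> F" by blast
    from step.IH show ?thesis
    proof (cases rule: converse_rtranclE)
      case base
      with yx j show ?thesis by blast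
    next
      case (step z)
      with single_valuedD[OF sv yx] show ?thesis by simp
    qed
  qed
qed

lemma weakly_conn_roots_eq:
  assumes "single_valued F" "r \<notin> Domain F" "s \<notin> Domain F" "(r,s) \<in> weakly_conn F"
  shows "r = s"
  using weakly_conn_to_root_rtrancl[OF assms(1,3,4)] assms(2)
  by (cases rule: converse_rtranclE) auto

lemma acyclic_reaches_root:
  fixes F :: "('n::finite \<times> 'n) set"
  assumes "acyclic F"
  obtains r where "(x,r) \<in> F\<^sup>*" "r \<notin> Domain F"
proof -
  have "wf (F\<inverse>)"
    using assms by (simp add: acyclic_converse finite_acyclic_wf)
  then have "\<exists>r. (x,r) \<in> F\<^sup>* \<and> r \<notin> Domain F"
  proof (induction x rule: wf_induct_rule)
    case (less x)
    show ?case
    proof (cases "x \<in> Domain F")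
      case True
      then obtain y where "(x,y) \<in> F" by blast
      with less.IH[of y] show ?thesis by (blast intro: converse_rtrancl_into_rtrancl)
    qed auto
  qed
  then show thesis using that by blast
qed

lemma single_valued_cycle_closed:
  assumes sv: "single_valued F" and cyc: "(x,x) \<in> F\<^sup>+" and xy: "(x,y) \<in> F\<^sup>*"
  shows "(y,y) \<in> F\<^sup>+"
  using xy
proof (induction rule: rtrancl_induct)
  case base
  show ?case by (rule cyc)
next
  case (step y z)
  from tranclD[OF step.IH] obtain z' where "(y,z') \<in> F" "(z',y) \<in> F\<^sup>*"
    by blast
  with single_valuedD[OF sv _ step.hyps(2)] step.hyps(2) show ?case
    by (simp add: rtrancl_into_trancl1)
qed

lemma outdeg_eq_0_iff: "outdeg F (v::'n::finite) = 0 \<longleftrightarrow> v \<notin> Domain F"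
  unfolding outdeg_def by auto

lemma single_valued_iff_outdeg_le_1: "single_valued F \<longleftrightarrow> (\<forall>v::'n::finite. outdeg F v \<le> 1)"
  unfolding single_valued_def outdeg_def by (auto simp: card_le_Suc0_iff_eq)

lemma rtrancl_restrict_closed:
  assumes "(y,z) \<in> S\<^sup>*" "y \<in> C" "\<And>a b. a \<in> C \<Longrightarrow> (a,b) \<in> S \<Longrightarrow> b \<in> C"
  shows "(y,z) \<in> (S \<inter> C \<times> C)\<^sup>*"
proof -
  from assms(1) have "(y,z) \<in> (S \<inter> C \<times> C)\<^sup>* \<and> z \<in> C"
  proof (induction rule: rtrancl_induct)
    case (step z z')
    then have "z' \<in> C" using assms(3) by blast
    with step show ?case by (blast intro: rtrancl_into_rtrancl)
  qed (simp add: assms(2))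
  then show ?thesis ..
qed

lemma converging_tree_class_iff:
  fixes F :: "('n::finite \<times> 'n) set"
  assumes C: "C \<in> UNIV // weakly_conn F"
  shows "converging_tree C F \<longleftrightarrow> (\<exists>r\<in>C. r \<notin> Domain F \<and> (\<forall>v\<in>C. v \<noteq> r \<longrightarrow> outdeg F v = 1))"
proof -
  let ?A = "F \<inter> C \<times> C"
  have closed: "b \<in> C" if "a \<in> C" "(a,b) \<in> F \<union> F\<inverse>" for a b
    using in_quotient_imp_closed[OF weakly_conn_equiv C] that
    by (auto simp: weakly_conn_def)
  have "(y,z) \<in> (?A \<union> ?A\<inverse>)\<^sup>*" if "y \<in> C" "z \<in> C" for y z
  proof -
    have "(y,z) \<in> (F \<union> F\<inverse>)\<^sup>*"
      using in_quotient_imp_in_rel[OF weakly_conn_equiv C] that by (simp add: weakly_conn_def)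
    from rtrancl_restrict_closed[OF this \<open>y \<in> C\<close> closed]
    have "(y,z) \<in> ((F \<union> F\<inverse>) \<inter> C \<times> C)\<^sup>*" .
    moreover have "(F \<union> F\<inverse>) \<inter> C \<times> C \<subseteq> ?A \<union> ?A\<inverse>" by auto
    ultimately show ?thesis using rtrancl_mono by blast
  qed
  moreover have outdeg_A: "outdeg ?A v = outdeg F v" if "v \<in> C" for v
  proof -
    have "(v,j) \<in> ?A \<longleftrightarrow> (v,j) \<in> F" for j
      using closed[OF that, of j] that by auto
    then show ?thesis unfolding outdeg_def by simp
  qed
  moreover have "C \<noteq> {}"
    using in_quotient_imp_non_empty[OF weakly_conn_equiv C] .
  ultimately show ?thesis
    unfolding converging_tree_def Let_def by (simp add: outdeg_A outdeg_eq_0_iff)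
qed

lemma class_roots_iff_single_valued_acyclic:
  fixes F :: "('n::finite \<times> 'n) set"
  shows "(\<forall>C \<in> UNIV // weakly_conn F. \<exists>r\<in>C. r \<notin> Domain F \<and> (\<forall>v\<in>C. v \<noteq> r \<longrightarrow> outdeg F v = 1))
         \<longleftrightarrow> single_valued F \<and> acyclic F"
    (is "(\<forall>C \<in> _. ?rooted C) \<longleftrightarrow> _")
proof
  assume rooted: "\<forall>C \<in> UNIV // weakly_conn F. ?rooted C"
  have class_root: "\<exists>r. (x,r) \<in> weakly_conn F \<and> r \<notin> Domain F \<and> (x \<noteq> r \<longrightarrow> outdeg F x = 1)" for x
  proof -
    have "weakly_conn F `` {x} \<in> UNIV // weakly_conn F" by (rule quotientI) simp
    with rooted show ?thesis by fastforce
  qed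
  have "outdeg F v \<le> 1" for v
    using class_root[of v] outdeg_eq_0_iff[of F v] by (cases "v \<in> Domain F") auto
  then have sv: "single_valued F"
    by (simp add: single_valued_iff_outdeg_le_1)
  have "(x,x) \<notin> F\<^sup>+" for x
  proof
    assume cyc: "(x,x) \<in> F\<^sup>+"
    obtain r where "(x,r) \<in> weakly_conn F" "r \<notin> Domain F"
      using class_root by blast
    with weakly_conn_to_root_rtrancl[OF sv] have "(x,r) \<in> F\<^sup>*" by blast
    from single_valued_cycle_closed[OF sv cyc this] have "(r,r) \<in> F\<^sup>+" .
    with \<open>r \<notin> Domain F\<close> show False by (auto dest: tranclD)
  qed
  with sv show "single_valued F \<and> acyclic F" unfolding acyclic_def by blast
next
  assume "single_valued F \<and> acyclic F"
  then have sv: "single_valued F" and ac: "acyclic F" by auto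
  show "\<forall>C \<in> UNIV // weakly_conn F. ?rooted C"
  proof
    fix C assume C: "C \<in> UNIV // weakly_conn F"
    then obtain x where x: "C = weakly_conn F `` {x}" by (rule quotientE)
    obtain r where "(x,r) \<in> F\<^sup>*" and r: "r \<notin> Domain F"
      using acyclic_reaches_root[OF ac] .
    then have rC: "r \<in> C" using x rtrancl_subset_weakly_conn by blast
    have "outdeg F v = 1" if "v \<in> C" "v \<noteq> r" for v
    proof -
      have "(v,r) \<in> weakly_conn F"
        using in_quotient_imp_in_rel[OF weakly_conn_equiv C] that rC by blast
      with weakly_conn_roots_eq[OF sv _ r] \<open>v \<noteq> r\<close> have "outdeg F v \<noteq> 0"
        by (auto simp: outdeg_eq_0_iff)
      moreover have "outdeg F v \<le> 1" using sv single_valued_iff_outdeg_le_1 by blast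
      ultimately show ?thesis by linarith
    qed
    with rC r show "?rooted C" by blast
  qed
qed

section \<open>In-forests\<close>

lemma in_forest_iff:
  fixes W :: "real^'n^'n"
  shows "in_forest W F \<longleftrightarrow> F \<subseteq> arcs W \<and> single_valued F \<and> acyclic F"
  unfolding in_forest_def class_roots_iff_single_valued_acyclic[symmetric]
  by (simp only: ball_cong[OF refl converging_tree_class_iff])

lemma num_trees_eq_card_roots:
  fixes F :: "('n::finite \<times> 'n) set"
  assumes sv: "single_valued F" and ac: "acyclic F"
  shows "num_trees F = card (- Domain F)"
proof -
  have "bij_betw (\<lambda>r. weakly_conn F `` {r}) (- Domain F) (UNIV // weakly_conn F)"
  proof (rule bij_betwI')
    fix r s assume "r \<in> - Domain F" "s \<in> - Domain F"
    with weakly_conn_roots_eq[OF sv] show "weakly_conn F `` {r} = weakly_conn F `` {s} \<longleftrightarrow> r = s"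
      using eq_equiv_class_iff[OF weakly_conn_equiv, of r s F] by auto
  next
    fix C assume "C \<in> UNIV // weakly_conn F"
    then obtain x where x: "C = weakly_conn F `` {x}" by (rule quotientE)
    obtain r where "(x,r) \<in> F\<^sup>*" "r \<notin> Domain F"
      using acyclic_reaches_root[OF ac] .
    with x rtrancl_subset_weakly_conn show "\<exists>r \<in> - Domain F. C = weakly_conn F `` {r}"
      by (metis ComplI eq_equiv_class_iff[OF weakly_conn_equiv] UNIV_I subsetD)
  qed (simp add: quotientI)
  then show ?thesis unfolding num_trees_def by (simp add: bij_betw_same_card)
qed

lemma in_forest_card_add_num_trees:
  fixes W :: "real^'n^'n"
  assumes "in_forest W F"
  shows "card F + num_trees F = CARD('n)"
proof -
  have sv: "single_valued F" and ac: "acyclic F" using assms by (auto simp: in_forest_iff)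
  have "inj_on fst F" using sv by (auto simp: inj_on_def single_valued_def)
  then have "card F = card (Domain F)" by (simp add: Domain_fst card_image)
  moreover have "card (Domain F) + card (- Domain F) = CARD('n)"
    using card_Un_disjoint[of "Domain F" "- Domain F"] by simp
  ultimately show ?thesis using num_trees_eq_card_roots[OF sv ac] by simp
qed

lemma in_forest_empty: "in_forest W {}"
  by (simp add: in_forest_iff acyclic_def)

lemma forest_dim_attained:
  fixes W :: "real^'n^'n"
  obtains F where "in_forest W F" "num_trees F = forest_dim W"
proof -
  have "forest_dim W \<in> num_trees ` {F. in_forest W F}"
    unfolding forest_dim_def by (intro Min_in finite_imageI) (use in_forest_empty in auto)
  then obtain F where "in_forest W F" "forest_dim W = num_trees F" by auto
  with that show thesis by simp
qed

lemma forest_dim_le_num_trees: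
  fixes W :: "real^'n^'n"
  shows "in_forest W F \<Longrightarrow> forest_dim W \<le> num_trees F"
  unfolding forest_dim_def by (intro Min_le) auto

lemma in_forest_card_le:
  fixes W :: "real^'n^'n"
  shows "in_forest W F \<Longrightarrow> card F \<le> CARD('n) - forest_dim W"
  using in_forest_card_add_num_trees[of W F] forest_dim_le_num_trees[of W F] by linarith

lemma exists_maximal_in_forest:
  fixes W :: "real^'n^'n"
  obtains F where "in_forest W F" "card F = CARD('n) - forest_dim W"
proof -
  obtain F where "in_forest W F" "num_trees F = forest_dim W"
    by (rule forest_dim_attained)
  with in_forest_card_add_num_trees[of W F] that show thesis by simp
qed

text \<open>Only meaningful when \<open>i \<in> Domain F\<close>; for a root it is an unspecified vertex.\<close>
definition parent :: "('n \<times> 'n) set \<Rightarrow> 'n \<Rightarrow> 'n" where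
  "parent F i = (THE p. (i,p) \<in> F)"

lemma parent_eqI: "single_valued F \<Longrightarrow> (i,p) \<in> F \<Longrightarrow> parent F i = p"
  unfolding parent_def by (rule the_equality) (auto dest: single_valuedD)

lemma single_valued_Diff_notin_Domain: "single_valued F \<Longrightarrow> (i,p) \<in> F \<Longrightarrow> i \<notin> Domain (F - {(i,p)})"
  by (auto dest: single_valuedD)

lemma single_valued_insert_notin_Domain:
  "single_valued F \<Longrightarrow> i \<notin> Domain F \<Longrightarrow> single_valued (insert (i,m) F)"
  by (auto simp: single_valued_def)

lemma in_forest_subset: "in_forest W F \<Longrightarrow> G \<subseteq> F \<Longrightarrow> in_forest W G"
  using single_valued_subset[of G F] acyclic_subset[of F G] by (auto simp: in_forest_iff)

lemma in_forest_insert: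
  assumes F: "in_forest W F" and i: "i \<notin> Domain F" and im: "(i,m) \<in> arcs W"
    and nc: "(i,m) \<notin> weakly_conn F"
  shows "in_forest W (insert (i,m) F)"
proof -
  have "(m,i) \<notin> F\<^sup>*"
  proof
    assume "(m,i) \<in> F\<^sup>*"
    then have "(m,i) \<in> weakly_conn F" using rtrancl_subset_weakly_conn by blast
    with nc weakly_conn_sym[of m i F] show False by blast
  qed
  moreover have "single_valued (insert (i,m) F)"
    using F i by (simp add: in_forest_iff single_valued_insert_notin_Domain)
  ultimately show ?thesis using F im by (simp add: in_forest_iff)
qed

lemma in_forest_Diff_arc_disconnects:
  assumes F: "in_forest W F" and ip: "(i,p) \<in> F"
  shows "(i,p) \<notin> weakly_conn (F - {(i,p)})"
proof
  let ?H = "F - {(i,p)}"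
  have sv: "single_valued F" and ac: "acyclic F" using F by (simp_all add: in_forest_iff)
  assume "(i,p) \<in> weakly_conn ?H"
  then have "(p,i) \<in> weakly_conn ?H" by (rule weakly_conn_sym)
  moreover have "single_valued ?H" using single_valued_subset[OF _ sv] by blast
  ultimately have "(p,i) \<in> ?H\<^sup>*"
    using weakly_conn_to_root_rtrancl[OF _ single_valued_Diff_notin_Domain[OF sv ip]] by simp
  then have "(p,i) \<in> F\<^sup>*" using rtrancl_mono[of ?H F] by blast
  with ip have "(i,i) \<in> F\<^sup>+" by (rule rtrancl_into_trancl2)
  with ac show False by (simp add: acyclic_def)
qed

lemma in_tree_rooted_at_iff:
  "in_tree_rooted_at F i (j::'n::finite) \<longleftrightarrow> (i,j) \<in> weakly_conn F \<and> j \<notin> Domain F"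
  by (simp add: in_tree_rooted_at_def outdeg_eq_0_iff)

lemma in_tree_rooted_at_root:
  fixes F :: "('n::finite \<times> 'n) set"
  assumes "single_valued F" "i \<notin> Domain F"
  shows "in_tree_rooted_at F i j \<longleftrightarrow> j = i"
  using weakly_conn_roots_eq[OF assms] assms(2) by (auto simp: in_tree_rooted_at_iff)

lemma in_tree_rooted_at_weakly_conn_cong:
  fixes F :: "('n::finite \<times> 'n) set"
  assumes "(i,m) \<in> weakly_conn F"
  shows "in_tree_rooted_at F i j \<longleftrightarrow> in_tree_rooted_at F m j"
proof -
  have "(i,j) \<in> weakly_conn F \<longleftrightarrow> (m,j) \<in> weakly_conn F"
    using assms weakly_conn_sym[of i m F] weakly_conn_trans[of i m F j] weakly_conn_trans[of m i F j]
    by blast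
  then show ?thesis by (simp add: in_tree_rooted_at_iff)
qed

lemma in_tree_rooted_at_insert_root:
  fixes H :: "('n::finite \<times> 'n) set"
  assumes sv: "single_valued H" and i: "i \<notin> Domain H" and nc: "(i,m) \<notin> weakly_conn H"
  shows "in_tree_rooted_at (insert (i,m) H) i j \<longleftrightarrow> in_tree_rooted_at H m j"
proof -
  have "(i,j) \<in> weakly_conn (insert (i,m) H) \<longleftrightarrow> (i,j) \<in> weakly_conn H \<or> (m,j) \<in> weakly_conn H"
    using nc by (simp add: weakly_conn_insert)
  moreover have "(i,j) \<notin> weakly_conn H" if "j \<notin> Domain H" "j \<noteq> i"
    using weakly_conn_roots_eq[OF sv i that(1)] that(2) by blast
  moreover have "j \<noteq> i" if "(m,j) \<in> weakly_conn H"
    using that nc weakly_conn_sym[of m i H] by blast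
  ultimately show ?thesis
    unfolding in_tree_rooted_at_iff by auto
qed

lemma in_tree_rooted_at_insert_disconnected:
  fixes H :: "('n::finite \<times> 'n) set"
  assumes "(x,a) \<notin> weakly_conn H" "(x,b) \<notin> weakly_conn H"
  shows "in_tree_rooted_at (insert (a,b) H) x j \<longleftrightarrow> in_tree_rooted_at H x j"
  using assms by (auto simp: in_tree_rooted_at_iff weakly_conn_insert)

lemma exchange_parent_arc:
  fixes W :: "real^'n^'n"
  assumes F: "in_forest W F" and ip: "(i,p) \<in> F" and im: "(i,m) \<in> arcs W"
    and nc: "(i,m) \<notin> weakly_conn F"
  defines "F' \<equiv> insert (i,m) (F - {(i,p)})"
  shows "in_forest W F'" "card F' = card F" "(i,p) \<in> arcs W" "(i,m) \<in> F'"
    "(i,p) \<notin> weakly_conn F'" "insert (i,p) (F' - {(i,m)}) = F"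
    "W$i$p * weight W F' = W$i$m * weight W F"
    "in_tree_rooted_at F' p j \<longleftrightarrow> in_tree_rooted_at F i j"
proof -
  define H where "H = F - {(i,p)}"
  have H: "in_forest W H" using in_forest_subset[OF F] by (simp add: H_def)
  have sv: "single_valued H" using H by (simp add: in_forest_iff)
  have i: "i \<notin> Domain H"
    using single_valued_Diff_notin_Domain[of F i p] F ip by (simp add: H_def in_forest_iff)
  have FH: "F = insert (i,p) H" "(i,p) \<notin> H" and F'H: "F' = insert (i,m) H" "(i,m) \<notin> H"
    using ip i by (auto simp: H_def F'_def)
  have HF: "weakly_conn H \<subseteq> weakly_conn F"
    by (rule weakly_conn_mono) (simp add: H_def)
  have ncH: "(i,m) \<notin> weakly_conn H" "(i,p) \<notin> weakly_conn H"
    using nc HF in_forest_Diff_arc_disconnects[OF F ip] by (auto simp: H_def)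
  have pm: "(p,m) \<notin> weakly_conn H"
  proof
    assume "(p,m) \<in> weakly_conn H"
    with HF have "(p,m) \<in> weakly_conn F" by blast
    with weakly_conn_arc[OF ip] nc show False using weakly_conn_trans[of i p F m] by blast
  qed
  have ncH': "(m,p) \<notin> weakly_conn H" "(p,i) \<notin> weakly_conn H"
    using pm ncH weakly_conn_sym[of m p H] weakly_conn_sym[of p i H] by blast+
  show "in_forest W F'" unfolding F'H by (rule in_forest_insert[OF H i im ncH(1)])
  show "card F' = card F" using FH F'H by simp
  show "(i,p) \<in> arcs W" using F ip by (auto simp: in_forest_iff)
  show "(i,m) \<in> F'" "insert (i,p) (F' - {(i,m)}) = F" using FH F'H by auto
  show "(i,p) \<notin> weakly_conn F'"
    using ncH ncH' by (simp add: F'H weakly_conn_insert)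
  show "W$i$p * weight W F' = W$i$m * weight W F"
    using FH F'H by (simp add: weight_def)
  have "in_tree_rooted_at F i j \<longleftrightarrow> in_tree_rooted_at H p j"
    unfolding FH by (rule in_tree_rooted_at_insert_root[OF sv i ncH(2)])
  also have "\<dots> \<longleftrightarrow> in_tree_rooted_at F' p j"
    unfolding F'H using in_tree_rooted_at_insert_disconnected[OF ncH'(2) pm] by simp
  finally show "in_tree_rooted_at F' p j \<longleftrightarrow> in_tree_rooted_at F i j" by simp
qed

section \<open>The matrix-forest identity\<close>

definition forests :: "real^'n^'n \<Rightarrow> nat \<Rightarrow> ('n \<times> 'n) set set" where
  "forests W k = {F. in_forest W F \<and> card F = k}"

lemma sigma_eq_sum_forests: "sigma W k = (\<Sum>F\<in>forests W k. weight W F)"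
  by (simp add: sigma_def forests_def)

lemma Qmat_entry:
  "Qmat W k $ x $ j = (\<Sum>F\<in>forests W k. weight W F * of_bool (in_tree_rooted_at F x j))"
proof -
  have "{F. in_forest W F \<and> card F = k \<and> in_tree_rooted_at F x j}
      = forests W k \<inter> {F. in_tree_rooted_at F x j}"
    by (auto simp: forests_def)
  then show ?thesis by (simp add: Qmat_def)
qed

lemma laplacian_mult_entry:
  "(laplacian W ** A) $ i $ j = (\<Sum>m\<in>UNIV. W$i$m * (A$i$j - A$m$j))"
proof -
  have "(laplacian W ** A) $ i $ j
      = laplacian W $ i $ i * A$i$j + (\<Sum>m\<in>UNIV - {i}. laplacian W $ i $ m * A$m$j)"
    by (simp add: matrix_matrix_mult_def sum.remove)
  also have "\<dots> = (\<Sum>m\<in>UNIV - {i}. W$i$m * (A$i$j - A$m$j))"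
    by (simp add: laplacian_def sum_distrib_right right_diff_distrib sum_subtractf sum_negf)
  also have "\<dots> = (\<Sum>m\<in>UNIV. W$i$m * (A$i$j - A$m$j))"
    by (simp add: sum.remove[of UNIV i])
  finally show ?thesis .
qed

lemma sum_row_eq_sum_arcs:
  assumes "\<forall>a b. W$a$b \<ge> 0"
  shows "(\<Sum>m\<in>UNIV. W$i$m * f m) = (\<Sum>m\<in>{m. (i,m) \<in> arcs W}. W$i$m * f m)"
proof (rule sum.mono_neutral_right)
  show "\<forall>m\<in>UNIV - {m. (i,m) \<in> arcs W}. W$i$m * f m = 0"
    using assms by (auto simp: arcs_def intro: antisym)
qed auto

definition root_arc_pairs :: "real^'n^'n \<Rightarrow> nat \<Rightarrow> 'n \<Rightarrow> (('n \<times> 'n) set \<times> 'n) set" where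
  "root_arc_pairs W k i = {(F,m). F \<in> forests W k \<and> (i,m) \<in> arcs W \<and> i \<notin> Domain F \<and> (i,m) \<notin> weakly_conn F}"

definition nonroot_arc_pairs :: "real^'n^'n \<Rightarrow> nat \<Rightarrow> 'n \<Rightarrow> (('n \<times> 'n) set \<times> 'n) set" where
  "nonroot_arc_pairs W k i = {(F,m). F \<in> forests W k \<and> (i,m) \<in> arcs W \<and> i \<in> Domain F \<and> (i,m) \<notin> weakly_conn F}"

lemma sum_attach_root_arc:
  fixes W :: "real^'n^'n" and g :: "('n \<times> 'n) set \<Rightarrow> real"
  shows "(\<Sum>(F,m) \<in> root_arc_pairs W k i.
            W$i$m * weight W F * g (insert (i,m) F))
       = (\<Sum>G \<in> {G \<in> forests W (Suc k). i \<in> Domain G}. weight W G * g G)"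
proof (rule sum.reindex_bij_witness[where i = "\<lambda>G. (G - {(i, parent G i)}, parent G i)"
      and j = "\<lambda>(F,m). insert (i,m) F"])
  fix a
  assume "a \<in> root_arc_pairs W k i"
  then obtain F m where a: "a = (F,m)" and F: "in_forest W F" "card F = k"
    and im: "(i,m) \<in> arcs W" and i: "i \<notin> Domain F" and nc: "(i,m) \<notin> weakly_conn F"
    by (auto simp: root_arc_pairs_def forests_def)
  have G: "in_forest W (insert (i,m) F)" by (rule in_forest_insert[OF F(1) i im nc])
  then have "parent (insert (i,m) F) i = m" by (simp add: in_forest_iff parent_eqI)
  moreover have "(i,m) \<notin> F" using i by blast
  ultimately show "(\<lambda>G. (G - {(i, parent G i)}, parent G i)) ((\<lambda>(F,m). insert (i,m) F) a) = a"
    and "(\<lambda>(F,m). insert (i,m) F) a \<in> {G \<in> forests W (Suc k). i \<in> Domain G}"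
    and "weight W ((\<lambda>(F,m). insert (i,m) F) a) * g ((\<lambda>(F,m). insert (i,m) F) a)
         = (\<lambda>(F,m). W$i$m * weight W F * g (insert (i,m) F)) a"
    using G F(2) by (auto simp: a forests_def weight_def)
next
  fix G assume "G \<in> {G \<in> forests W (Suc k). i \<in> Domain G}"
  then obtain p where G: "in_forest W G" "card G = Suc k" and ip: "(i,p) \<in> G"
    by (auto simp: forests_def)
  have sv: "single_valued G" using G(1) by (simp add: in_forest_iff)
  have "parent G i = p" by (rule parent_eqI[OF sv ip])
  moreover have "in_forest W (G - {(i,p)})" by (rule in_forest_subset[OF G(1)]) blast
  moreover have "(i,p) \<in> arcs W" using G(1) ip by (auto simp: in_forest_iff)
  moreover note single_valued_Diff_notin_Domain[OF sv ip] in_forest_Diff_arc_disconnects[OF G(1) ip]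
  ultimately show "(\<lambda>(F,m). insert (i,m) F) ((\<lambda>G. (G - {(i, parent G i)}, parent G i)) G) = G"
    and "(\<lambda>G. (G - {(i, parent G i)}, parent G i)) G
         \<in> root_arc_pairs W k i"
    using G(2) ip by (auto simp: root_arc_pairs_def forests_def)
qed

lemma sum_exchange_parent_arc:
  fixes W :: "real^'n^'n"
  shows "(\<Sum>(F,m)\<in>nonroot_arc_pairs W k i. W$i$m * weight W F * of_bool (in_tree_rooted_at F i j))
       = (\<Sum>(F,m)\<in>nonroot_arc_pairs W k i. W$i$m * weight W F * of_bool (in_tree_rooted_at F m j))"
proof -
  \<comment> \<open>exchanging the out-arc \<open>i \<rightarrow> p\<close> for \<open>i \<rightarrow> m\<close> is an involution on these pairs\<close>
  define swap where "swap = (\<lambda>(F,m). (insert (i,m) (F - {(i, parent F i)}), parent F i))"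
  show ?thesis
  proof (rule sum.reindex_bij_witness[where i = swap and j = swap])
    fix a assume "a \<in> nonroot_arc_pairs W k i"
    then obtain F m p where a: "a = (F,m)" and F: "in_forest W F" "card F = k"
      and im: "(i,m) \<in> arcs W" and ip: "(i,p) \<in> F" and nc: "(i,m) \<notin> weakly_conn F"
      by (auto simp: nonroot_arc_pairs_def forests_def)
    let ?F' = "insert (i,m) (F - {(i,p)})"
    note F' = exchange_parent_arc[OF F(1) ip im nc]
    have swap_a: "swap a = (?F', p)"
      using F(1) ip by (simp add: swap_def a in_forest_iff parent_eqI)
    have "parent ?F' i = m" using F'(1,4) by (simp add: in_forest_iff parent_eqI)
    then have "swap (?F', p) = (F, m)"
      using F'(6) unfolding swap_def case_prod_conv by simp
    then show "swap (swap a) = a" "swap (swap a) = a"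
      using swap_a a by simp_all
    show "swap a \<in> nonroot_arc_pairs W k i" "swap a \<in> nonroot_arc_pairs W k i"
      using F'(1-5) F(2) by (auto simp: swap_a nonroot_arc_pairs_def forests_def)
    show "(\<lambda>(F,m). W$i$m * weight W F * of_bool (in_tree_rooted_at F m j)) (swap a)
        = (\<lambda>(F,m). W$i$m * weight W F * of_bool (in_tree_rooted_at F i j)) a"
      unfolding swap_a using F'(7,8) by (simp add: a)
  qed
qed

lemma sum_arc_pairs_cancel:
  fixes W :: "real^'n^'n"
  shows "(\<Sum>(F,m) \<in> forests W k \<times> {m. (i,m) \<in> arcs W}.
            W$i$m * weight W F * (of_bool (in_tree_rooted_at F i j) - of_bool (in_tree_rooted_at F m j)))
       = (\<Sum>(F,m) \<in> root_arc_pairs W k i.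
            W$i$m * weight W F * (of_bool (in_tree_rooted_at F i j) - of_bool (in_tree_rooted_at F m j)))"
    (is "sum ?f ?P = sum ?f ?B")
proof -
  let ?C = "nonroot_arc_pairs W k i"
  have "sum ?f ?P = sum ?f (?B \<union> ?C)"
  proof (rule sum.mono_neutral_right)
    show "\<forall>x \<in> ?P - (?B \<union> ?C). ?f x = 0"
      by (auto simp: root_arc_pairs_def nonroot_arc_pairs_def in_tree_rooted_at_weakly_conn_cong)
  qed (auto simp: root_arc_pairs_def nonroot_arc_pairs_def)
  also have "\<dots> = sum ?f ?B + sum ?f ?C"
    by (rule sum.union_disjoint) (auto simp: root_arc_pairs_def nonroot_arc_pairs_def)
  also have "sum ?f ?C = 0"
    using sum_exchange_parent_arc[where W = W and k = k and i = i and j = j]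
    by (simp add: case_prod_unfold right_diff_distrib sum_subtractf del: sum_mult_of_bool_eq)
  finally show ?thesis by simp
qed

lemma sum_attach_root_arc_eq:
  fixes W :: "real^'n^'n"
  shows "(\<Sum>(F,m) \<in> root_arc_pairs W k i.
            W$i$m * weight W F * (of_bool (in_tree_rooted_at F i j) - of_bool (in_tree_rooted_at F m j)))
       = of_bool (i = j) * sigma W (Suc k) - Qmat W (Suc k) $ i $ j"
proof -
  let ?g = "\<lambda>G. of_bool (i = j) - of_bool (in_tree_rooted_at G i j) :: real"
  have "(\<Sum>(F,m) \<in> root_arc_pairs W k i.
            W$i$m * weight W F * (of_bool (in_tree_rooted_at F i j) - of_bool (in_tree_rooted_at F m j)))
      = (\<Sum>(F,m) \<in> root_arc_pairs W k i.
            W$i$m * weight W F * ?g (insert (i,m) F))"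
    unfolding root_arc_pairs_def
  proof (rule sum.cong[OF refl], clarify)
    fix F m assume F: "F \<in> forests W k" and i: "i \<notin> Domain F" and nc: "(i,m) \<notin> weakly_conn F"
    have sv: "single_valued F" using F by (simp add: forests_def in_forest_iff)
    show "W$i$m * weight W F * (of_bool (in_tree_rooted_at F i j) - of_bool (in_tree_rooted_at F m j))
        = W$i$m * weight W F * ?g (insert (i,m) F)"
      using in_tree_rooted_at_root[OF sv i, of j] in_tree_rooted_at_insert_root[OF sv i nc, of j]
      by auto
  qed
  also have "\<dots> = (\<Sum>G \<in> {G \<in> forests W (Suc k). i \<in> Domain G}. weight W G * ?g G)"
    by (rule sum_attach_root_arc)
  also have "\<dots> = (\<Sum>G \<in> forests W (Suc k). weight W G * ?g G)"
    by (rule sum.mono_neutral_left) (auto simp: forests_def in_forest_iff in_tree_rooted_at_root)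
  also have "\<dots> = of_bool (i = j) * sigma W (Suc k) - Qmat W (Suc k) $ i $ j"
    unfolding sigma_eq_sum_forests Qmat_entry
    by (simp add: right_diff_distrib sum_subtractf sum_distrib_left mult.commute del: sum_mult_of_bool_eq)
  finally show ?thesis .
qed

lemma laplacian_mult_Qmat:
  fixes W :: "real^'n^'n"
  assumes nonneg: "\<forall>a b. W$a$b \<ge> 0"
  shows "laplacian W ** Qmat W k = sigma W (Suc k) *\<^sub>R mat 1 - Qmat W (Suc k)"
proof -
  have "(laplacian W ** Qmat W k) $ i $ j = of_bool (i = j) * sigma W (Suc k) - Qmat W (Suc k) $ i $ j"
    for i j
  proof -
    let ?M = "{m. (i,m) \<in> arcs W}"
    let ?d = "\<lambda>F m. of_bool (in_tree_rooted_at F i j) - of_bool (in_tree_rooted_at F m j) :: real"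
    have "(laplacian W ** Qmat W k) $ i $ j = (\<Sum>m\<in>?M. W$i$m * (Qmat W k $i$j - Qmat W k $m$j))"
      by (simp add: laplacian_mult_entry sum_row_eq_sum_arcs[OF nonneg])
    also have "\<dots> = (\<Sum>m\<in>?M. \<Sum>F\<in>forests W k. W$i$m * weight W F * ?d F m)"
      unfolding Qmat_entry
      by (simp add: sum_distrib_left right_diff_distrib sum_subtractf mult.assoc del: sum_mult_of_bool_eq)
    also have "\<dots> = (\<Sum>(F,m) \<in> forests W k \<times> ?M. W$i$m * weight W F * ?d F m)"
      by (subst sum.swap) (simp add: sum.cartesian_product)
    also have "\<dots> = of_bool (i = j) * sigma W (Suc k) - Qmat W (Suc k) $ i $ j"
      unfolding sum_arc_pairs_cancel by (rule sum_attach_root_arc_eq)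
    finally show ?thesis .
  qed
  then show ?thesis by (simp add: vec_eq_iff mat_def)
qed

lemma forests_0: "forests W 0 = {{}}"
  using in_forest_empty by (auto simp: forests_def)

lemma Qmat_0: "Qmat W 0 = mat 1"
  by (simp add: vec_eq_iff mat_def Qmat_entry forests_0 in_tree_rooted_at_iff weakly_conn_def weight_def)

lemma sigma_0: "sigma W 0 = 1"
  by (simp add: sigma_eq_sum_forests forests_0 weight_def)

lemma forests_beyond_max:
  fixes W :: "real^'n^'n"
  shows "CARD('n) - forest_dim W < k \<Longrightarrow> forests W k = {}"
  using in_forest_card_le[of W] by (fastforce simp: forests_def)

lemma matrix_forest_identity:
  fixes W :: "real^'n^'n"
  assumes nonneg: "\<forall>a b. W$a$b \<ge> 0"
  shows "(mat 1 + \<tau> *\<^sub>R laplacian W) ** Q_poly W \<tau> = sigma_poly W \<tau> *\<^sub>R mat 1"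
proof -
  define N where "N = CARD('n) - forest_dim W"
  define X where "X k = sigma W k *\<^sub>R mat 1 - Qmat W k" for k
  have Q_poly_Suc: "Q_poly W \<tau> = (\<Sum>k\<le>Suc N. \<tau>^k *\<^sub>R Qmat W k)"
    using forests_beyond_max[of W "Suc N"] by (simp add: Q_poly_def N_def vec_eq_iff Qmat_entry)
  have sigma_poly_Suc: "sigma_poly W \<tau> = (\<Sum>k\<le>Suc N. sigma W k * \<tau>^k)"
    using forests_beyond_max[of W "Suc N"] by (simp add: sigma_poly_def N_def sigma_eq_sum_forests)
  have "\<tau> *\<^sub>R (laplacian W ** Q_poly W \<tau>) = (\<Sum>k\<le>N. \<tau>^Suc k *\<^sub>R X (Suc k))"
    by (simp add: Q_poly_def N_def X_def matrix_mult_sum_right matrix_scalar_ac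
        scalar_matrix_assoc[symmetric] laplacian_mult_Qmat[OF nonneg] scaleR_sum_right)
  also have "\<dots> = (\<Sum>k\<le>Suc N. \<tau>^k *\<^sub>R X k)"
    by (subst sum.atMost_Suc_shift) (simp add: X_def Qmat_0 sigma_0)
  finally have "(mat 1 + \<tau> *\<^sub>R laplacian W) ** Q_poly W \<tau>
      = (\<Sum>k\<le>Suc N. \<tau>^k *\<^sub>R Qmat W k) + (\<Sum>k\<le>Suc N. \<tau>^k *\<^sub>R X k)"
    by (simp add: matrix_add_rdistrib scalar_matrix_assoc[symmetric] Q_poly_Suc)
  also have "\<dots> = (\<Sum>k\<le>Suc N. (sigma W k * \<tau>^k) *\<^sub>R mat 1)"
    unfolding sum.distrib[symmetric] by (rule sum.cong) (simp_all add: X_def scaleR_diff_right)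
  also have "\<dots> = sigma_poly W \<tau> *\<^sub>R mat 1"
    by (simp only: sigma_poly_Suc scaleR_sum_left)
  finally show ?thesis .
qed

section \<open>Positivity and the limit\<close>

lemma weight_pos: "F \<subseteq> arcs W \<Longrightarrow> 0 < weight W F"
  unfolding weight_def arcs_def by (rule prod_pos) auto

lemma sigma_nonneg: "0 \<le> sigma W k"
  unfolding sigma_eq_sum_forests
  by (intro sum_nonneg) (simp add: forests_def in_forest_iff weight_pos less_imp_le)

lemma sigma_max_pos:
  fixes W :: "real^'n^'n"
  shows "0 < sigma W (CARD('n) - forest_dim W)"
proof -
  obtain F where F: "in_forest W F" "card F = CARD('n) - forest_dim W"
    by (rule exists_maximal_in_forest)
  show ?thesis unfolding sigma_eq_sum_forests
  proof (rule sum_pos2)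
    show "F \<in> forests W (CARD('n) - forest_dim W)" using F by (simp add: forests_def)
    show "0 < weight W F" using F(1) by (simp add: in_forest_iff weight_pos)
  qed (auto simp: forests_def in_forest_iff weight_pos less_imp_le)
qed

lemma sigma_poly_ge_1: "0 \<le> \<tau> \<Longrightarrow> 1 \<le> sigma_poly W \<tau>"
  unfolding sigma_poly_def
  using member_le_sum[of 0 "{..CARD(_) - forest_dim W}" "\<lambda>k. sigma W k * \<tau>^k"]
  by (simp add: sigma_0 sigma_nonneg)

theorem proposition11:
  fixes W :: "real^'n^'n"
  assumes "CARD('n) > 1"
    and "\<forall>i. W$i$i = 0"
    and "\<forall>i j. W$i$j \<ge> 0"
  shows "(Jmat W \<longlongrightarrow> Jtilde W) at_top \<and>
         ((\<lambda>\<tau>::real. matrix_inv (mat 1 + \<tau> *\<^sub>R laplacian W)) \<longlongrightarrow> Jtilde W) at_top"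
proof
  show J: "(Jmat W \<longlongrightarrow> Jtilde W) at_top"
    unfolding Jmat_def[abs_def] sigma_poly_def Q_poly_def Jtilde_def
    using sigma_max_pos[of W] by (intro tendsto_poly_ratio_at_top) simp
  have "Jmat W \<tau> = matrix_inv (mat 1 + \<tau> *\<^sub>R laplacian W)" if "0 \<le> \<tau>" for \<tau>
  proof (rule matrix_inv_eqI[symmetric])
    have "(mat 1 + \<tau> *\<^sub>R laplacian W) ** Jmat W \<tau>
        = inverse (sigma_poly W \<tau>) *\<^sub>R ((mat 1 + \<tau> *\<^sub>R laplacian W) ** Q_poly W \<tau>)"
      by (simp add: Jmat_def matrix_scalar_ac scalar_matrix_assoc)
    then show "(mat 1 + \<tau> *\<^sub>R laplacian W) ** Jmat W \<tau> = mat 1"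
      using sigma_poly_ge_1[OF that, of W] by (simp add: matrix_forest_identity[OF assms(3)])
  qed
  then have "\<forall>\<^sub>F \<tau> in at_top. Jmat W \<tau> = matrix_inv (mat 1 + \<tau> *\<^sub>R laplacian W)"
    by (intro eventually_at_top_linorderI)
  with J show "((\<lambda>\<tau>. matrix_inv (mat 1 + \<tau> *\<^sub>R laplacian W)) \<longlongrightarrow> Jtilde W) at_top"
    by (rule Lim_transform_eventually)
qed

end
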